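(* Let $t$ be a deterministic process term of the process algebra $P_{\mathrm{PA}}$ (described in the context) and let $\sigma_1,\sigma_2$ be closed substitutions such that $\mathbf d(\sigma_1(x),\sigma_2(x))<1$ for every state variable $x$. Then \[ \mathbf d(\sigma_1(t),\sigma_2(t)) \le \mathrm{dda}\bigl(\llbracket t\rrbracket_{\mathcal M},\mathbf d(\sigma_1,\sigma_2)\bigr). \]
   Context: Probabilistic transition systems and bisimilarity metric. A signature $\Sigma$ is a countable set of operators $f$, each with an arity $r(f)\in\mathbb N$. Fix disjoint countably infinite sets $\mathcal V_s$ of state variables and $\mathcal V_d$ of distribution variables; $\mathcal V=\mathcal V_s\cup\mathcal V_d$. Open (state) terms are built from state variables and operators; closed terms (processes) $T(\Sigma)$ contain no variables. $\Delta(T(\Sigma))$ is the set of discrete probability distributions on $T(\Sigma)$, $\delta_t$ is the Dirac distribution at $t$, and for distributions $\pi_1,\dots,\pi_{r(f)}$, $f(\pi_1,\dots,\pi_{r(f)})$ is the distribution assigning $f(t_1,\dots,t_{r(f)})$ probability $\prod_i\pi_i(t_i)$. Distribution terms are: distribution variables $\mu$, $\delta(t)$ for state terms $t$, convex combinations $\sum_{i\in I}q_i\theta_i$ ($q_i\in(0,1]$, $\sum q_i=1$), and $f(\theta_1,\dots,\theta_{r(f)})$. A closed substitution $\sigma$ maps state variables to closed terms and distribution variables to distributions; it extends homomorphically to state terms and to distribution terms via $\sigma(\delta(t))=\delta_{\sigma(t)}$, $\sigma(\sum q_i\theta_i)=\sum q_i\sigma(\theta_i)$, $\sigma(f(\theta_1,\dots))=f(\sigma(\theta_1),\dots)$.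 A PTS is $(T(\Sigma),A,\to)$ with $A$ a countable set of actions and $\to\subseteq T(\Sigma)\times A\times\Delta(T(\Sigma))$; write $t\xrightarrow{a}\pi$, and $\mathit{der}(t,a)=\{\pi\mid t\xrightarrow a\pi\}$. A PGSOS rule has the form $\dfrac{\{x_i\xrightarrow{a_{i,m}}\mu_{i,m}\mid i\in I,m\in M_i\}\ \ \{x_i\not\xrightarrow{b_{i,n}}\mid i\in I,n\in N_i\}}{f(x_1,\dots,x_{r(f)})\xrightarrow{a}\theta}$ with $I=\{1,\dots,r(f)\}$, finite $M_i,N_i$, pairwise distinct $x_i\in\mathcal V_s$, pairwise distinct $\mu_{i,m}\in\mathcal V_d$, and $\theta$ a distribution term whose variables are among the $x_i$ and $\mu_{i,m}$. A PTSS $(\Sigma,A,R)$ with $R$ a countable set of PGSOS rules determines a unique supported model: $t\xrightarrow a\pi$ iff for some rule and closed substitution $\sigma$, $\sigma(x_i)\xrightarrow{a_{i,m}}\sigma(\mu_{i,m})$ for all positive premises, $\sigma(x_i)$ has no $b_{i,n}$-transition for all negative premises, $\sigma(f(x_1,\dots))=t$ and $\sigma(\theta)=\pi$. For $d:T(\Sigma)\times T(\Sigma)\to[0,1]$, the Kantorovich lifting is $K(d)(\pi,\pi')=\min_{\omega}\sum_{t,t'}d(t,t')\omega(t,t')$ over couplings $\omega$ of $\pi,\pi'$; the Hausdorff lifting is $H(\hat d)(\Pi_1,\Pi_2)=\max\{\sup_{\pi_1\in\Pi_1}\inf_{\pi_2\in\Pi_2}\hat d(\pi_1,\pi_2),\sup_{\pi_2\in\Pi_2}\inf_{\pi_1\in\Pi_1}\hat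 d(\pi_2,\pi_1)\}$ with $\inf\emptyset=1$, $\sup\emptyset=0$. Let $B(d)(t,t')=\sup_{a\in A}H(K(d))(\mathit{der}(t,a),\mathit{der}(t',a))$. The bisimilarity metric $\mathbf d$ is the least fixed point of $B$ on $[0,1]^{T(\Sigma)\times T(\Sigma)}$ ordered pointwise (equivalently the least 1-bounded pseudometric $d$ such that whenever $d(t,t')<1$ and $t\xrightarrow a\pi$ there is $t'\xrightarrow a\pi'$ with $K(d)(\pi,\pi')\le d(t,t')$). The process algebra $P_{\mathrm{PA}}$: operators are the constant $0$, for each $a\in A$, $n\ge1$, $q_1,\dots,q_n\in(0,1]$ with $\sum q_i=1$ the $n$-ary prefix $a.\bigoplus_{i=1}^n[q_i]\_$ (written $a.\_$ when $n=1$), binary $+$, and binary $\|_B$ for each $B\subseteq A$ ($\|$ denotes $\|_A$). Rules: $a.\bigoplus_{i}[q_i]x_i\xrightarrow a\sum_i q_i\delta(x_i)$; from $x_1\xrightarrow a\mu_1$ infer $x_1+x_2\xrightarrow a\mu_1$; from $x_2\xrightarrow a\mu_2$ infer $x_1+x_2\xrightarrow a\mu_2$; for $a\in B$ from $x_1\xrightarrow a\mu_1$, $x_2\xrightarrow a\mu_2$ infer $x_1\|_Bx_2\xrightarrow a\mu_1\|_B\mu_2$; for $a\notin B$ from $x_1\xrightarrow a\mu_1$ infer $x_1\|_Bx_2\xrightarrow a\mu_1\|_B\delta(x_2)$ and from $x_2\xrightarrow a\mu_2$ infer $x_1\|_Bx_2\xrightarrow a\delta(x_1)\|_B\mu_2$.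 Deterministic process terms are the open terms built only from $0$, state variables, $a.\_$ and $\|$. Multiplicities: $\mathcal M$ is the set of maps $m:\mathcal V\to\mathbb N\cup\{\infty\}$; $0$ is the zero map and $n_V$ ($V\subseteq\mathcal V$) maps $x\in V$ to $n$ and other variables to $0$; $1_x=1_{\{x\}}$. For deterministic terms: $\llbracket0\rrbracket_{\mathcal M}=0$, $\llbracket x\rrbracket_{\mathcal M}=1_x$, $\llbracket t_1\|t_2\rrbracket_{\mathcal M}(x)=\llbracket t_1\rrbracket_{\mathcal M}(x)+\llbracket t_2\rrbracket_{\mathcal M}(x)$, $\llbracket a.t\rrbracket_{\mathcal M}=\llbracket t\rrbracket_{\mathcal M}$. $\mathcal E$ is the set of maps $e:\mathcal V\to[0,1)$. $\mathrm{dda}(m,e)=1-\prod_{x\in\mathcal V}(1-e(x))^{m(x)}$ (with $c^\infty=0$ for $0\le c<1$ and $1^\infty=1$). For closed substitutions, $\mathbf d(\sigma_1,\sigma_2)\in\mathcal E$ is $x\mapsto\mathbf d(\sigma_1(x),\sigma_2(x))$. *)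

theory Defs
  imports "HOL-Probability.Probability_Mass_Function" "HOL-Library.Extended_Nat"
begin

text \<open>State terms over actions 'a and state variables 'v.
  Prefix a [(t1,q1),...,(tn,qn)] is the n-ary probabilistic prefix a.(+)_i [q_i] t_i;
  Par B t1 t2 is t1 ||_B t2.\<close>
datatype ('a, 'v) pterm =
    Nil
  | Var 'v
  | Prefix 'a "(('a, 'v) pterm \<times> real) list"
  | Plus "('a, 'v) pterm" "('a, 'v) pterm"
  | Par "'a set" "('a, 'v) pterm" "('a, 'v) pterm"

definition valid_weights :: "('b \<times> real) list \<Rightarrow> bool" where
  "valid_weights qs \<longleftrightarrow> qs \<noteq> [] \<and> (\<forall>p\<in>set qs. 0 < snd p \<and> snd p \<le> 1)
      \<and> sum_list (map snd qs) = 1"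

text \<open>Well-formed terms: every prefix operator used belongs to the signature.\<close>
fun wf_term :: "('a, 'v) pterm \<Rightarrow> bool" where
  "wf_term Nil = True"
| "wf_term (Var x) = True"
| "wf_term (Prefix a qs) = (valid_weights qs \<and> (\<forall>p\<in>set qs. wf_term (fst p)))"
| "wf_term (Plus t u) = (wf_term t \<and> wf_term u)"
| "wf_term (Par B t u) = (wf_term t \<and> wf_term u)"

fun vars :: "('a, 'v) pterm \<Rightarrow> 'v set" where
  "vars Nil = {}"
| "vars (Var x) = {x}"
| "vars (Prefix a qs) = (\<Union>p\<in>set qs. vars (fst p))"
| "vars (Plus t u) = vars t \<union> vars u"
| "vars (Par B t u) = vars t \<union> vars u"

definition procs :: "('a, 'v) pterm set" where
  "procs = {t. wf_term t \<and> vars t = {}}"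

fun subst :: "('v \<Rightarrow> ('a, 'v) pterm) \<Rightarrow> ('a, 'v) pterm \<Rightarrow> ('a, 'v) pterm" where
  "subst \<sigma> Nil = Nil"
| "subst \<sigma> (Var x) = \<sigma> x"
| "subst \<sigma> (Prefix a qs) = Prefix a (map (\<lambda>p. (subst \<sigma> (fst p), snd p)) qs)"
| "subst \<sigma> (Plus t u) = Plus (subst \<sigma> t) (subst \<sigma> u)"
| "subst \<sigma> (Par B t u) = Par B (subst \<sigma> t) (subst \<sigma> u)"

definition closed_subst :: "('v \<Rightarrow> ('a, 'v) pterm) \<Rightarrow> bool" where
  "closed_subst \<sigma> \<longleftrightarrow> (\<forall>x. \<sigma> x \<in> procs)"

section \<open>Operational semantics (the PGSOS rules of P_PA; no negative premises,
  so the supported model is the inductively generated one)\<close>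

inductive step :: "('a, 'v) pterm \<Rightarrow> 'a \<Rightarrow> ('a, 'v) pterm pmf \<Rightarrow> bool" where
  prefix: "valid_weights qs \<Longrightarrow> step (Prefix a qs) a (pmf_of_list qs)"
| plus1: "step t1 a \<mu>1 \<Longrightarrow> step (Plus t1 t2) a \<mu>1"
| plus2: "step t2 a \<mu>2 \<Longrightarrow> step (Plus t1 t2) a \<mu>2"
| par_sync: "a \<in> B \<Longrightarrow> step t1 a \<mu>1 \<Longrightarrow> step t2 a \<mu>2 \<Longrightarrow>
     step (Par B t1 t2) a (map_pmf (\<lambda>(u, v). Par B u v) (pair_pmf \<mu>1 \<mu>2))"
| par_left: "a \<notin> B \<Longrightarrow> step t1 a \<mu>1 \<Longrightarrow>
     step (Par B t1 t2) a (map_pmf (\<lambda>u. Par B u t2) \<mu>1)"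
| par_right: "a \<notin> B \<Longrightarrow> step t2 a \<mu>2 \<Longrightarrow>
     step (Par B t1 t2) a (map_pmf (\<lambda>v. Par B t1 v) \<mu>2)"

definition der :: "('a, 'v) pterm \<Rightarrow> 'a \<Rightarrow> ('a, 'v) pterm pmf set" where
  "der t a = {\<pi>. step t a \<pi>}"

definition sup01 :: "real set \<Rightarrow> real" where
  "sup01 S = (if S = {} then 0 else Sup S)"

definition inf01 :: "real set \<Rightarrow> real" where
  "inf01 S = (if S = {} then 1 else Inf S)"

definition couplings :: "'b pmf \<Rightarrow> 'b pmf \<Rightarrow> ('b \<times> 'b) pmf set" where
  "couplings \<pi> \<pi>' = {\<omega>. map_pmf fst \<omega> = \<pi> \<and> map_pmf snd \<omega> = \<pi>'}"

text \<open>Kantorovich lifting (the minimum over couplings, written as an infimum).\<close>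
definition kantorovich :: "('b \<Rightarrow> 'b \<Rightarrow> real) \<Rightarrow> 'b pmf \<Rightarrow> 'b pmf \<Rightarrow> real" where
  "kantorovich d \<pi> \<pi>' =
     Inf ((\<lambda>\<omega>. measure_pmf.expectation \<omega> (\<lambda>(u, v). d u v)) ` couplings \<pi> \<pi>')"

definition hausdorff :: "('c \<Rightarrow> 'c \<Rightarrow> real) \<Rightarrow> 'c set \<Rightarrow> 'c set \<Rightarrow> real" where
  "hausdorff dh P1 P2 =
     max (sup01 ((\<lambda>p1. inf01 ((\<lambda>p2. dh p1 p2) ` P2)) ` P1))
         (sup01 ((\<lambda>p2. inf01 ((\<lambda>p1. dh p2 p1) ` P1)) ` P2))"

definition bisim_fun :: "(('a, 'v) pterm \<Rightarrow> ('a, 'v) pterm \<Rightarrow> real)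
    \<Rightarrow> ('a, 'v) pterm \<Rightarrow> ('a, 'v) pterm \<Rightarrow> real" where
  "bisim_fun d t t' = sup01 ((\<lambda>a. hausdorff (kantorovich d) (der t a) (der t' a)) ` UNIV)"

text \<open>The bisimilarity metric: least fixed point of bisim_fun on [0,1]^(procs x procs),
  given (Knaster-Tarski) as the pointwise infimum of all pre-fixed points.\<close>
definition bisim_metric :: "('a, 'v) pterm \<Rightarrow> ('a, 'v) pterm \<Rightarrow> real" where
  "bisim_metric t t' = Inf {d t t' | d.
      (\<forall>u\<in>procs. \<forall>v\<in>procs. 0 \<le> d u v \<and> d u v \<le> 1) \<and>
      (\<forall>u\<in>procs. \<forall>v\<in>procs. bisim_fun d u v \<le> d u v)}"

inductive deterministic :: "('a, 'v) pterm \<Rightarrow> bool" where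
  "deterministic Nil"
| "deterministic (Var x)"
| "deterministic t \<Longrightarrow> deterministic (Prefix a [(t, 1)])"
| "deterministic t \<Longrightarrow> deterministic u \<Longrightarrow> deterministic (Par UNIV t u)"

text \<open>Multiplicity semantics (only meaningful on deterministic terms;
  other constructors are mapped to 0 arbitrarily).\<close>
fun mult :: "('a, 'v) pterm \<Rightarrow> 'v \<Rightarrow> enat" where
  "mult Nil = (\<lambda>x. 0)"
| "mult (Var y) = (\<lambda>x. if x = y then 1 else 0)"
| "mult (Prefix a qs) = (case qs of [(t, q)] \<Rightarrow> mult t | _ \<Rightarrow> (\<lambda>x. 0))"
| "mult (Plus t u) = (\<lambda>x. 0)"
| "mult (Par B t u) = (if B = UNIV then (\<lambda>x. mult t x + mult u x) else (\<lambda>x. 0))"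

text \<open>c ^ m for m in N u {infinity}, with c^infinity = 0 for 0 <= c < 1 and 1^infinity = 1.\<close>
definition epow :: "real \<Rightarrow> enat \<Rightarrow> real" where
  "epow c m = (case m of enat n \<Rightarrow> c ^ n | \<infinity> \<Rightarrow> (if c = 1 then 1 else 0))"

text \<open>dda(m,e) = 1 - prod_x (1 - e x)^(m x); the (possibly infinite) product of factors in
  [0,1] is the infimum of its finite partial products.\<close>
definition dda :: "('v \<Rightarrow> enat) \<Rightarrow> ('v \<Rightarrow> real) \<Rightarrow> real" where
  "dda m e = 1 - Inf {(\<Prod>x\<in>F. epow (1 - e x) (m x)) | F. finite F}"

end

theory Submission
  imports Defs
begin

text \<open>
  The bisimilarity metric is the least pre-fixed point of the bisimulation
  functional, so it suffices to exhibit a 1-bounded pre-fixed point that is small on the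
  pair (sigma1(t), sigma2(t)). Call u and v linked with weight r if they arise from one
  context built from 0, a._ and synchronous parallel composition by plugging pairs of
  processes (p, q) with d(p, q) < 1 into its holes, r being the product of the 1 - d(p, q).
  The candidate is dstar u v = inf {1 - r | u, v linked with weight r} (and 1 otherwise).
  Each transition of u is matched by one of v within 1 - r in the Kantorovich lifting of
  dstar: at the holes by the transfer property of the bisimilarity metric, at prefixes by
  the Dirac coupling, and at parallel compositions by the product of couplings, where the
  distances combine by the probabilistic sum a + b - ab. Hence dstar is pre-fixed, and the
  bisimilarity metric of a linked pair is at most 1 - r. Finally a deterministic term closed
  by sigma1, sigma2 is a linked pair whose weight is the product of (1 - d(x))^m(x), which is
  one of the partial products in the definition of dda.
\<close>

lemma bdd_01: "S \<subseteq> {0..(1::real)} \<Longrightarrow> bdd_above S \<and> bdd_below S"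
  by (meson atLeastAtMost_iff bdd_aboveI bdd_belowI subsetD)

lemma sup01_upper: "x \<in> S \<Longrightarrow> S \<subseteq> {0..1} \<Longrightarrow> x \<le> sup01 S"
  unfolding sup01_def using bdd_01 by (auto intro: cSup_upper)

lemma sup01_least: "(\<And>x. x \<in> S \<Longrightarrow> x \<le> c) \<Longrightarrow> 0 \<le> c \<Longrightarrow> sup01 S \<le> c"
  unfolding sup01_def by (cases "S = {}") (simp_all add: cSup_least)

lemma inf01_lower: "x \<in> S \<Longrightarrow> S \<subseteq> {0..1} \<Longrightarrow> inf01 S \<le> x"
  unfolding inf01_def using bdd_01 by (auto intro: cInf_lower)

lemma inf01_greatest: "(\<And>x. x \<in> S \<Longrightarrow> c \<le> x) \<Longrightarrow> c \<le> 1 \<Longrightarrow> c \<le> inf01 S"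
  unfolding inf01_def by (cases "S = {}") (simp_all add: cInf_greatest)

lemma inf01_lessD: "inf01 S < z \<Longrightarrow> z \<le> 1 \<Longrightarrow> \<exists>x\<in>S. x < z"
  unfolding inf01_def using cInf_lessD[of S z] by (cases "S = {}") auto

lemma sup01_bounds: "S \<subseteq> {0..1} \<Longrightarrow> 0 \<le> sup01 S \<and> sup01 S \<le> 1"
proof (cases "S = {}")
  case False
  then obtain x where "x \<in> S" by blast
  moreover assume "S \<subseteq> {0..1}"
  ultimately show ?thesis
    using sup01_upper[of x S] sup01_least[of S 1] by fastforce
qed (simp add: sup01_def)

lemma inf01_bounds: "S \<subseteq> {0..1} \<Longrightarrow> 0 \<le> inf01 S \<and> inf01 S \<le> 1"
proof (cases "S = {}")
  case False
  then obtain x where "x \<in> S" by blast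
  moreover assume "S \<subseteq> {0..1}"
  ultimately show ?thesis
    using inf01_lower[of x S] inf01_greatest[of S 0] by fastforce
qed (simp add: inf01_def)

section \<open>The Hausdorff lifting\<close>

definition bounded01_on :: "'c set \<Rightarrow> ('c \<Rightarrow> 'c \<Rightarrow> real) \<Rightarrow> bool" where
  "bounded01_on P dh \<longleftrightarrow> (\<forall>p\<in>P. \<forall>q\<in>P. 0 \<le> dh p q \<and> dh p q \<le> 1)"

definition half_haus :: "('c \<Rightarrow> 'c \<Rightarrow> real) \<Rightarrow> 'c set \<Rightarrow> 'c set \<Rightarrow> real" where
  "half_haus dh P1 P2 = sup01 ((\<lambda>p1. inf01 ((\<lambda>p2. dh p1 p2) ` P2)) ` P1)"

lemma hausdorff_halves: "hausdorff dh P1 P2 = max (half_haus dh P1 P2) (half_haus dh P2 P1)"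
  unfolding hausdorff_def half_haus_def ..

lemma hausdorff_sym: "hausdorff dh P1 P2 = hausdorff dh P2 P1"
  unfolding hausdorff_halves by simp

lemma inf01_bounded:
  assumes "bounded01_on (P1 \<union> P2) dh" "p \<in> P1"
  shows "0 \<le> inf01 ((\<lambda>q. dh p q) ` P2) \<and> inf01 ((\<lambda>q. dh p q) ` P2) \<le> 1"
  by (rule inf01_bounds) (use assms in \<open>auto simp: bounded01_on_def\<close>)

lemma half_haus_bounds:
  assumes "bounded01_on (P1 \<union> P2) dh"
  shows "0 \<le> half_haus dh P1 P2 \<and> half_haus dh P1 P2 \<le> 1"
  unfolding half_haus_def by (rule sup01_bounds) (use inf01_bounded[OF assms] in auto)

lemma hausdorff_bounds:
  assumes "bounded01_on (P1 \<union> P2) dh"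
  shows "0 \<le> hausdorff dh P1 P2 \<and> hausdorff dh P1 P2 \<le> 1"
  using half_haus_bounds[OF assms] half_haus_bounds[of P2 P1 dh] assms
  unfolding hausdorff_halves by (auto simp: Un_commute)

lemma half_haus_mono:
  assumes "bounded01_on (P1 \<union> P2) dh1" "bounded01_on (P1 \<union> P2) dh2"
    and "\<And>p q. p \<in> P1 \<Longrightarrow> q \<in> P2 \<Longrightarrow> dh1 p q \<le> dh2 p q"
  shows "half_haus dh1 P1 P2 \<le> half_haus dh2 P1 P2"
  unfolding half_haus_def
proof (rule sup01_least)
  show "0 \<le> sup01 ((\<lambda>p1. inf01 ((\<lambda>p2. dh2 p1 p2) ` P2)) ` P1)"
    using half_haus_bounds[OF assms(2)] by (simp add: half_haus_def)
  fix x assume "x \<in> (\<lambda>p1. inf01 ((\<lambda>p2. dh1 p1 p2) ` P2)) ` P1"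
  then obtain p where p: "p \<in> P1" and x: "x = inf01 ((\<lambda>q. dh1 p q) ` P2)" by blast
  have "x \<le> inf01 ((\<lambda>q. dh2 p q) ` P2)"
    unfolding x
  proof (rule inf01_greatest)
    fix y assume "y \<in> (\<lambda>q. dh2 p q) ` P2"
    then obtain q where "q \<in> P2" "y = dh2 p q" by blast
    then show "inf01 ((\<lambda>q. dh1 p q) ` P2) \<le> y"
      using assms(1,3) p by (intro order_trans[OF inf01_lower])
        (auto simp: bounded01_on_def)
  qed (use inf01_bounded[OF assms(1) p] in simp)
  also have "\<dots> \<le> sup01 ((\<lambda>p1. inf01 ((\<lambda>p2. dh2 p1 p2) ` P2)) ` P1)"
    using p inf01_bounded[OF assms(2)] by (intro sup01_upper) auto
  finally show "x \<le> \<dots>" .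
qed

lemma hausdorff_mono:
  assumes "bounded01_on (P1 \<union> P2) dh1" "bounded01_on (P1 \<union> P2) dh2"
    and "\<And>p q. p \<in> P1 \<union> P2 \<Longrightarrow> q \<in> P1 \<union> P2 \<Longrightarrow> dh1 p q \<le> dh2 p q"
  shows "hausdorff dh1 P1 P2 \<le> hausdorff dh2 P1 P2"
  using assms half_haus_mono[OF assms(1,2)] half_haus_mono[of P2 P1 dh1 dh2]
  unfolding hausdorff_halves by (auto simp: Un_commute intro!: max.mono)

text \<open>If the Hausdorff distance is below c < 1, every element of P1 has an almost-as-close
  partner in P2 (the partner exists because an infimum below 1 is over a nonempty set).\<close>
lemma hausdorff_match:
  assumes "bounded01_on (P1 \<union> P2) dh" "hausdorff dh P1 P2 \<le> c" "c < 1" "0 < e" "p \<in> P1"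
  shows "\<exists>q\<in>P2. dh p q < c + e"
proof -
  have "inf01 ((\<lambda>q. dh p q) ` P2) \<le> half_haus dh P1 P2"
    unfolding half_haus_def using assms(5) inf01_bounded[OF assms(1)]
    by (intro sup01_upper) auto
  also have "\<dots> \<le> c"
    using assms(2) unfolding hausdorff_halves by simp
  finally have "inf01 ((\<lambda>q. dh p q) ` P2) < min (c + e) 1"
    using assms(3,4) by simp
  then show ?thesis
    using inf01_lessD[of _ "min (c + e) 1"] by fastforce
qed

lemma half_haus_le:
  assumes "bounded01_on (P1 \<union> P2) dh" "0 \<le> c"
    and "\<And>p e. p \<in> P1 \<Longrightarrow> 0 < e \<Longrightarrow> \<exists>q\<in>P2. dh p q \<le> c + e"
  shows "half_haus dh P1 P2 \<le> c"
  unfolding half_haus_def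
proof (rule sup01_least[OF _ assms(2)])
  fix x assume "x \<in> (\<lambda>p1. inf01 ((\<lambda>p2. dh p1 p2) ` P2)) ` P1"
  then obtain p where p: "p \<in> P1" and x: "x = inf01 ((\<lambda>q. dh p q) ` P2)" by blast
  show "x \<le> c"
  proof (rule field_le_epsilon)
    fix e :: real assume "0 < e"
    then obtain q where q: "q \<in> P2" "dh p q \<le> c + e" using assms(3) p by blast
    have "x \<le> dh p q"
      unfolding x using assms(1) p q by (intro inf01_lower) (auto simp: bounded01_on_def)
    with q show "x \<le> c + e" by simp
  qed
qed

lemma hausdorff_le:
  assumes "bounded01_on (P1 \<union> P2) dh" "0 \<le> c"
    and "\<And>p e. p \<in> P1 \<Longrightarrow> 0 < e \<Longrightarrow> \<exists>q\<in>P2. dh p q \<le> c + e"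
    and "\<And>p e. p \<in> P2 \<Longrightarrow> 0 < e \<Longrightarrow> \<exists>q\<in>P1. dh p q \<le> c + e"
  shows "hausdorff dh P1 P2 \<le> c"
  using half_haus_le[OF assms(1-3)] half_haus_le[of P2 P1 dh c] assms
  unfolding hausdorff_halves by (simp add: Un_commute)

lemma procs_Par [simp]: "Par B t u \<in> procs \<longleftrightarrow> t \<in> procs \<and> u \<in> procs"
  by (auto simp: procs_def)

lemma valid_weights_wf: "valid_weights qs \<Longrightarrow> pmf_of_list_wf qs"
  unfolding valid_weights_def pmf_of_list_wf_def by auto

lemma step_procs: "step u a \<pi> \<Longrightarrow> u \<in> procs \<Longrightarrow> set_pmf \<pi> \<subseteq> procs"
proof (induction rule: step.induct)
  case (prefix qs a)
  have "set_pmf (pmf_of_list qs) \<subseteq> fst ` set qs"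
    using set_pmf_of_list[OF valid_weights_wf[OF prefix(1)]] by simp
  also have "\<dots> \<subseteq> procs"
    using prefix(2) by (auto simp: procs_def)
  finally show ?case .
qed (fastforce simp: procs_def)+

abbreviation proc_dists :: "('a, 'v) pterm pmf set" where
  "proc_dists \<equiv> {\<pi>. set_pmf \<pi> \<subseteq> procs}"

lemma der_procs: "u \<in> procs \<Longrightarrow> der u a \<subseteq> proc_dists"
  by (auto simp: der_def dest: step_procs)

section \<open>The Kantorovich lifting\<close>

definition bnd :: "(('a, 'v) pterm \<Rightarrow> ('a, 'v) pterm \<Rightarrow> real) \<Rightarrow> bool" where
  "bnd d \<longleftrightarrow> bounded01_on procs d"

abbreviation E :: "('b \<times> 'b) pmf \<Rightarrow> ('b \<Rightarrow> 'b \<Rightarrow> real) \<Rightarrow> real" where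
  "E \<omega> d \<equiv> measure_pmf.expectation \<omega> (\<lambda>(u, v). d u v)"

text \<open>The independent coupling shows that couplings always exist.\<close>
lemma pair_coupling: "pair_pmf \<pi> \<pi>' \<in> couplings \<pi> \<pi>'"
  by (simp add: couplings_def map_fst_pair_pmf map_snd_pair_pmf)

lemma coupling_procs:
  assumes "\<omega> \<in> couplings \<pi> \<pi>'" "\<pi> \<in> proc_dists" "\<pi>' \<in> proc_dists"
  shows "set_pmf \<omega> \<subseteq> procs \<times> procs"
proof -
  have "set_pmf \<pi> = fst ` set_pmf \<omega>" "set_pmf \<pi>' = snd ` set_pmf \<omega>"
    using assms(1) unfolding couplings_def by force+
  then show ?thesis using assms(2,3) by force
qed

lemma E_props:
  assumes "bnd d" "set_pmf \<omega> \<subseteq> procs \<times> procs"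
  shows "integrable (measure_pmf \<omega>) (\<lambda>(u, v). d u v)" "0 \<le> E \<omega> d" "E \<omega> d \<le> 1"
proof -
  have ae: "AE z in measure_pmf \<omega>. 0 \<le> (\<lambda>(u, v). d u v) z \<and> (\<lambda>(u, v). d u v) z \<le> 1"
    using assms by (auto simp: AE_measure_pmf_iff bnd_def bounded01_on_def)
  show i: "integrable (measure_pmf \<omega>) (\<lambda>(u, v). d u v)"
    by (rule measure_pmf.integrable_const_bound[where B=1]) (use ae in auto)
  show "0 \<le> E \<omega> d"
    by (rule measure_pmf.integral_ge_const[OF i]) (use ae in auto)
  show "E \<omega> d \<le> 1"
    by (rule measure_pmf.integral_le_const[OF i]) (use ae in auto)
qed

lemma E_nonneg_couplings:
  assumes "bnd d" "\<pi> \<in> proc_dists" "\<pi>' \<in> proc_dists" "x \<in> (\<lambda>\<omega>. E \<omega> d) ` couplings \<pi> \<pi>'"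
  shows "0 \<le> x"
  using assms E_props(2)[OF assms(1) coupling_procs[OF _ assms(2,3)]] by blast

lemma K_le:
  assumes "bnd d" "\<pi> \<in> proc_dists" "\<pi>' \<in> proc_dists" "\<omega> \<in> couplings \<pi> \<pi>'"
  shows "kantorovich d \<pi> \<pi>' \<le> E \<omega> d"
  unfolding kantorovich_def
  using assms(4) E_nonneg_couplings[OF assms(1-3)]
  by (intro cInf_lower bdd_belowI[where m=0]) auto

lemma K_approx:
  assumes "0 < e"
  shows "\<exists>\<omega>\<in>couplings \<pi> \<pi>'. E \<omega> d < kantorovich d \<pi> \<pi>' + e"
proof -
  have "(\<lambda>\<omega>. E \<omega> d) ` couplings \<pi> \<pi>' \<noteq> {}" using pair_coupling by blast
  from cInf_lessD[OF this, of "kantorovich d \<pi> \<pi>' + e"] assms show ?thesis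
    unfolding kantorovich_def by auto
qed

lemma K_bounds:
  assumes "bnd d" "\<pi> \<in> proc_dists" "\<pi>' \<in> proc_dists"
  shows "0 \<le> kantorovich d \<pi> \<pi>' \<and> kantorovich d \<pi> \<pi>' \<le> 1"
proof
  show "0 \<le> kantorovich d \<pi> \<pi>'"
    unfolding kantorovich_def using pair_coupling E_nonneg_couplings[OF assms]
    by (intro cInf_greatest) auto
  have "kantorovich d \<pi> \<pi>' \<le> E (pair_pmf \<pi> \<pi>') d"
    by (rule K_le[OF assms pair_coupling])
  also have "\<dots> \<le> 1"
    using E_props(3)[OF assms(1) coupling_procs[OF pair_coupling assms(2,3)]] .
  finally show "kantorovich d \<pi> \<pi>' \<le> 1" .
qed

lemma K_bounded: "bnd d \<Longrightarrow> P \<subseteq> proc_dists \<Longrightarrow> bounded01_on P (kantorovich d)"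
  unfolding bounded01_on_def using K_bounds by blast

lemma K_mono:
  assumes "bnd d1" "bnd d2" "\<And>u v. u \<in> procs \<Longrightarrow> v \<in> procs \<Longrightarrow> d1 u v \<le> d2 u v"
    and "\<pi> \<in> proc_dists" "\<pi>' \<in> proc_dists"
  shows "kantorovich d1 \<pi> \<pi>' \<le> kantorovich d2 \<pi> \<pi>'"
  unfolding kantorovich_def[of d2]
proof (rule cInf_greatest)
  show "(\<lambda>\<omega>. E \<omega> d2) ` couplings \<pi> \<pi>' \<noteq> {}" using pair_coupling by blast
  fix x assume "x \<in> (\<lambda>\<omega>. E \<omega> d2) ` couplings \<pi> \<pi>'"
  then obtain \<omega> where \<omega>: "\<omega> \<in> couplings \<pi> \<pi>'" and x: "x = E \<omega> d2" by blast
  have sp: "set_pmf \<omega> \<subseteq> procs \<times> procs" using coupling_procs[OF \<omega> assms(4,5)] .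
  have "kantorovich d1 \<pi> \<pi>' \<le> E \<omega> d1" by (rule K_le[OF assms(1,4,5) \<omega>])
  also have "\<dots> \<le> E \<omega> d2"
    by (rule integral_mono_AE[OF E_props(1)[OF assms(1) sp] E_props(1)[OF assms(2) sp]])
       (use sp assms(3) in \<open>auto simp: AE_measure_pmf_iff\<close>)
  finally show "kantorovich d1 \<pi> \<pi>' \<le> x" using x by simp
qed

lemma K_bounded_der:
  "bnd d \<Longrightarrow> u \<in> procs \<Longrightarrow> v \<in> procs \<Longrightarrow> bounded01_on (der u a \<union> der v a) (kantorovich d)"
  by (intro K_bounded Un_least der_procs)

lemma bisim_fun_bounds:
  assumes "bnd d" "u \<in> procs" "v \<in> procs"
  shows "0 \<le> bisim_fun d u v \<and> bisim_fun d u v \<le> 1"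
  unfolding bisim_fun_def
  using hausdorff_bounds[OF K_bounded_der[OF assms]] by (intro sup01_bounds) auto

lemma bisim_fun_mono:
  assumes "bnd d1" "bnd d2" "\<And>u v. u \<in> procs \<Longrightarrow> v \<in> procs \<Longrightarrow> d1 u v \<le> d2 u v"
    and "u \<in> procs" "v \<in> procs"
  shows "bisim_fun d1 u v \<le> bisim_fun d2 u v"
  unfolding bisim_fun_def
proof (rule sup01_least)
  have H2: "range (\<lambda>a. hausdorff (kantorovich d2) (der u a) (der v a)) \<subseteq> {0..1}"
    using hausdorff_bounds[OF K_bounded_der[OF assms(2,4,5)]] by auto
  show "0 \<le> sup01 (range (\<lambda>a. hausdorff (kantorovich d2) (der u a) (der v a)))"
    using sup01_bounds[OF H2] by simp
  fix x assume "x \<in> range (\<lambda>a. hausdorff (kantorovich d1) (der u a) (der v a))"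
  then obtain a where x: "x = hausdorff (kantorovich d1) (der u a) (der v a)" by blast
  have "x \<le> hausdorff (kantorovich d2) (der u a) (der v a)"
    unfolding x
  proof (rule hausdorff_mono[OF K_bounded_der[OF assms(1,4,5)] K_bounded_der[OF assms(2,4,5)]])
    fix p q assume "p \<in> der u a \<union> der v a" "q \<in> der u a \<union> der v a"
    then have "p \<in> proc_dists" "q \<in> proc_dists"
      using der_procs[OF assms(4)] der_procs[OF assms(5)] by blast+
    then show "kantorovich d1 p q \<le> kantorovich d2 p q"
      using K_mono[OF assms(1,2)] assms(3) by blast
  qed
  also have "\<dots> \<le> sup01 (range (\<lambda>a. hausdorff (kantorovich d2) (der u a) (der v a)))"
    by (rule sup01_upper[OF _ H2]) simp
  finally show "x \<le> \<dots>" .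
qed

lemma bisim_fun_match:
  assumes "bnd d" "u \<in> procs" "v \<in> procs" "bisim_fun d u v \<le> c" "c < 1" "0 < e"
    and "\<pi> \<in> der u a"
  shows "\<exists>\<pi>'\<in>der v a. kantorovich d \<pi> \<pi>' < c + e"
proof (rule hausdorff_match[OF K_bounded_der[OF assms(1-3)] _ assms(5-7)])
  have "range (\<lambda>a. hausdorff (kantorovich d) (der u a) (der v a)) \<subseteq> {0..1}"
    using hausdorff_bounds[OF K_bounded_der[OF assms(1-3)]] by auto
  then have "hausdorff (kantorovich d) (der u a) (der v a) \<le> bisim_fun d u v"
    unfolding bisim_fun_def by (rule sup01_upper[rotated]) simp
  with assms(4) show "hausdorff (kantorovich d) (der u a) (der v a) \<le> c" by simp
qed

section \<open>The bisimilarity metric as least pre-fixed point\<close>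

definition prefixed :: "(('a, 'v) pterm \<Rightarrow> ('a, 'v) pterm \<Rightarrow> real) \<Rightarrow> bool" where
  "prefixed d \<longleftrightarrow> (\<forall>u\<in>procs. \<forall>v\<in>procs. bisim_fun d u v \<le> d u v)"

lemma bisim_metric_Inf: "bisim_metric u v = Inf {d u v | d. bnd d \<and> prefixed d}"
  unfolding bisim_metric_def bnd_def prefixed_def bounded01_on_def by simp

text \<open>The constant distance 1 is a bounded pre-fixed point, so the infimum is over a nonempty set.\<close>
lemma one_bnd_prefixed: "bnd (\<lambda>_ _. 1) \<and> prefixed (\<lambda>_ _. 1)"
proof
  show one: "bnd (\<lambda>_ _. 1)" by (simp add: bnd_def bounded01_on_def)
  show "prefixed (\<lambda>_ _. 1)"
    unfolding prefixed_def using bisim_fun_bounds[OF one] by blast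
qed

lemma bisim_metric_le_prefixed:
  "bnd d \<Longrightarrow> prefixed d \<Longrightarrow> u \<in> procs \<Longrightarrow> v \<in> procs \<Longrightarrow> bisim_metric u v \<le> d u v"
  unfolding bisim_metric_Inf
  by (rule cInf_lower) (auto intro!: bdd_belowI[where m=0] simp: bnd_def bounded01_on_def)

lemma bisim_metric_ge:
  assumes "u \<in> procs" "v \<in> procs" "\<And>d. bnd d \<Longrightarrow> prefixed d \<Longrightarrow> c \<le> d u v"
  shows "c \<le> bisim_metric u v"
  unfolding bisim_metric_Inf using one_bnd_prefixed assms(3)
  by (intro cInf_greatest) auto

lemma bisim_metric_bnd: "bnd bisim_metric"
  unfolding bnd_def bounded01_on_def
proof (intro ballI conjI)
  fix u v :: "('a, 'b) pterm" assume uv: "u \<in> procs" "v \<in> procs"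
  show "0 \<le> bisim_metric u v"
    by (rule bisim_metric_ge[OF uv]) (use uv in \<open>auto simp: bnd_def bounded01_on_def\<close>)
  show "bisim_metric u v \<le> 1"
    using bisim_metric_le_prefixed[of "\<lambda>_ _. 1", OF _ _ uv] one_bnd_prefixed by blast
qed

lemma bisim_metric_prefixed: "prefixed bisim_metric"
  unfolding prefixed_def
proof (intro ballI bisim_metric_ge)
  fix u v :: "('a, 'b) pterm" and d :: "('a, 'b) pterm \<Rightarrow> ('a, 'b) pterm \<Rightarrow> real"
  assume uv: "u \<in> procs" "v \<in> procs" and d: "bnd d" "prefixed d"
  have "bisim_fun bisim_metric u v \<le> bisim_fun d u v"
    by (rule bisim_fun_mono[OF bisim_metric_bnd d(1) bisim_metric_le_prefixed[OF d] uv])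
  also have "\<dots> \<le> d u v" using d(2) uv by (simp add: prefixed_def)
  finally show "bisim_fun bisim_metric u v \<le> d u v" .
qed

section \<open>Probabilistic sum and parallel composition\<close>

text \<open>The probabilistic sum a + b - ab = 1 - (1 - a)(1 - b): the distance contributed by two
  independent components; it is how distances combine under synchronous parallel composition.\<close>
definition psum :: "real \<Rightarrow> real \<Rightarrow> real" where
  "psum a b = a + b - a * b"

lemma psum_one_minus: "psum (1 - p) (1 - q) = 1 - p * q"
  by (simp add: psum_def algebra_simps)

lemma psum_bounds:
  fixes a b :: real
  assumes "0 \<le> a" "a \<le> 1" "0 \<le> b" "b \<le> 1"
  shows "0 \<le> psum a b \<and> psum a b \<le> 1"
proof -
  have "0 \<le> (1 - a) * (1 - b)" "(1 - a) * (1 - b) \<le> 1"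
    using assms by (simp_all add: mult_le_one)
  moreover have "psum a b = 1 - (1 - a) * (1 - b)"
    by (simp add: psum_def algebra_simps)
  ultimately show ?thesis by simp
qed

lemma psum_approx:
  fixes a b c d e :: real
  assumes "0 \<le> a" "a \<le> 1" "0 \<le> b" "b \<le> 1" "0 \<le> c" "c \<le> 1" "0 \<le> d" "d \<le> 1"
    and "a \<le> c + e" "b \<le> d + e" "0 \<le> e"
  shows "psum a b \<le> psum c d + 2 * e"
proof -
  have shrink: "x * y \<le> e" if "x \<le> e" "0 \<le> y" "y \<le> 1" for x y :: real
  proof (cases "x \<le> 0")
    case True
    then show ?thesis using that assms(11) mult_nonpos_nonneg[of x y] by linarith
  next
    case False
    then show ?thesis using that mult_left_mono[of y 1 x] by linarith
  qed
  have "(a - c) * (1 - b) \<le> e" using assms by (intro shrink) auto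
  moreover have "(b - d) * (1 - c) \<le> e" using assms by (intro shrink) auto
  moreover have "psum a b - psum c d = (a - c) * (1 - b) + (b - d) * (1 - c)"
    by (simp add: psum_def algebra_simps)
  ultimately show ?thesis by linarith
qed

lemma psum_Inf:
  fixes A B :: "real set"
  assumes "A \<subseteq> {0..1}" "B \<subseteq> {0..1}" "A \<noteq> {}" "B \<noteq> {}"
    and "\<And>a b. a \<in> A \<Longrightarrow> b \<in> B \<Longrightarrow> z \<le> psum a b"
  shows "z \<le> psum (Inf A) (Inf B)"
proof (rule field_le_epsilon)
  fix e :: real assume e: "0 < e"
  obtain a where a: "a \<in> A" "a < Inf A + e / 2"
    using cInf_lessD[OF assms(3), of "Inf A + e / 2"] e by auto
  obtain b where b: "b \<in> B" "b < Inf B + e / 2"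
    using cInf_lessD[OF assms(4), of "Inf B + e / 2"] e by auto
  have "Inf A \<in> {0..1}" "Inf B \<in> {0..1}"
    using a(1) b(1) assms(1-4) bdd_01[of A] bdd_01[of B]
    by (auto intro!: cInf_greatest order_trans[OF cInf_lower])
  then have "psum a b \<le> psum (Inf A) (Inf B) + 2 * (e / 2)"
    using a b assms(1,2) e by (intro psum_approx) auto
  with assms(5)[OF a(1) b(1)] show "z \<le> psum (Inf A) (Inf B) + e" by simp
qed

lemma expectation_pair_mult:
  fixes f :: "'a \<Rightarrow> real" and g :: "'b \<Rightarrow> real"
  assumes f: "\<And>x. 0 \<le> f x \<and> f x \<le> 1" and g: "\<And>y. 0 \<le> g y \<and> g y \<le> 1"
  shows "measure_pmf.expectation (pair_pmf A B) (\<lambda>z. f (fst z) * g (snd z))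
       = measure_pmf.expectation A f * measure_pmf.expectation B g"
proof -
  have iA: "integrable (measure_pmf A) f"
    by (rule measure_pmf.integrable_const_bound[where B=1]) (use f in auto)
  have iB: "integrable (measure_pmf B) g"
    by (rule measure_pmf.integrable_const_bound[where B=1]) (use g in auto)
  have iP: "integrable (measure_pmf (pair_pmf A B)) (\<lambda>z. f (fst z) * g (snd z))"
    by (rule measure_pmf.integrable_const_bound[where B=1])
       (use f g in \<open>auto intro!: mult_le_one simp: abs_mult\<close>)
  have nA: "0 \<le> measure_pmf.expectation A f" using f by (simp add: integral_nonneg_AE)
  have nB: "0 \<le> measure_pmf.expectation B g" using g by (simp add: integral_nonneg_AE)
  have nP: "0 \<le> measure_pmf.expectation (pair_pmf A B) (\<lambda>z. f (fst z) * g (snd z))"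
    using f g by (simp add: integral_nonneg_AE)
  have "ennreal (measure_pmf.expectation (pair_pmf A B) (\<lambda>z. f (fst z) * g (snd z)))
      = (\<integral>\<^sup>+z. ennreal (f (fst z) * g (snd z)) \<partial>pair_pmf A B)"
    by (rule nn_integral_eq_integral[symmetric]) (use iP f g in auto)
  also have "\<dots> = (\<integral>\<^sup>+a. \<integral>\<^sup>+b. ennreal (f a) * ennreal (g b) \<partial>B \<partial>A)"
    by (simp add: nn_integral_pair_pmf' ennreal_mult f g)
  also have "\<dots> = (\<integral>\<^sup>+a. ennreal (f a) \<partial>A) * (\<integral>\<^sup>+b. ennreal (g b) \<partial>B)"
    by (simp add: nn_integral_cmult nn_integral_multc)
  also have "\<dots> = ennreal (measure_pmf.expectation A f * measure_pmf.expectation B g)"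
    using nn_integral_eq_integral[OF iA] nn_integral_eq_integral[OF iB] f g
    by (simp add: ennreal_mult nA nB)
  finally show ?thesis using nP nA nB by (simp add: ennreal_inj)
qed

lemma expectation_pair_psum:
  fixes f :: "'a \<Rightarrow> real" and g :: "'b \<Rightarrow> real"
  assumes f: "\<And>x. 0 \<le> f x \<and> f x \<le> 1" and g: "\<And>y. 0 \<le> g y \<and> g y \<le> 1"
  shows "measure_pmf.expectation (pair_pmf A B) (\<lambda>z. psum (f (fst z)) (g (snd z)))
       = psum (measure_pmf.expectation A f) (measure_pmf.expectation B g)"
proof -
  let ?P = "measure_pmf (pair_pmf A B)"
  have bounded: "integrable (measure_pmf M) h" if "\<And>x. \<bar>h x\<bar> \<le> 1" for M and h :: "'c \<Rightarrow> real"
    by (rule measure_pmf.integrable_const_bound[where B=1]) (use that in auto)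
  have i1: "integrable ?P (\<lambda>z. f (fst z))" and i2: "integrable ?P (\<lambda>z. g (snd z))"
    using f g by (auto intro!: bounded)
  have i3: "integrable ?P (\<lambda>z. f (fst z) * g (snd z))"
    using f g by (intro bounded) (simp add: abs_mult mult_le_one)
  have "measure_pmf.expectation (pair_pmf A B) (\<lambda>z. psum (f (fst z)) (g (snd z)))
      = measure_pmf.expectation (pair_pmf A B) (\<lambda>z. f (fst z))
        + measure_pmf.expectation (pair_pmf A B) (\<lambda>z. g (snd z))
        - measure_pmf.expectation (pair_pmf A B) (\<lambda>z. f (fst z) * g (snd z))"
    unfolding psum_def using i1 i2 i3 by simp
  then show ?thesis
    using expectation_pair_mult[OF f g, of A B] by (simp add: psum_def)
qed

abbreviation par_pmf :: "('a, 'v) pterm pmf \<Rightarrow> ('a, 'v) pterm pmf \<Rightarrow> ('a, 'v) pterm pmf" where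
  "par_pmf \<pi>1 \<pi>2 \<equiv> map_pmf (\<lambda>(u, v). Par UNIV u v) (pair_pmf \<pi>1 \<pi>2)"

definition par_coupling ::
  "(('a, 'v) pterm \<times> ('a, 'v) pterm) pmf \<Rightarrow> (('a, 'v) pterm \<times> ('a, 'v) pterm) pmf
     \<Rightarrow> (('a, 'v) pterm \<times> ('a, 'v) pterm) pmf" where
  "par_coupling \<omega>1 \<omega>2 =
     map_pmf (\<lambda>((u1, v1), (u2, v2)). (Par UNIV u1 u2, Par UNIV v1 v2)) (pair_pmf \<omega>1 \<omega>2)"

lemma par_coupling_couplings:
  assumes "\<omega>1 \<in> couplings \<pi>1 \<pi>1'" "\<omega>2 \<in> couplings \<pi>2 \<pi>2'"
  shows "par_coupling \<omega>1 \<omega>2 \<in> couplings (par_pmf \<pi>1 \<pi>2) (par_pmf \<pi>1' \<pi>2')"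
proof -
  have "map_pmf fst (par_coupling \<omega>1 \<omega>2)
      = map_pmf (\<lambda>(u, v). Par UNIV u v) (map_pmf (\<lambda>(x, y). (fst x, fst y)) (pair_pmf \<omega>1 \<omega>2))"
    "map_pmf snd (par_coupling \<omega>1 \<omega>2)
      = map_pmf (\<lambda>(u, v). Par UNIV u v) (map_pmf (\<lambda>(x, y). (snd x, snd y)) (pair_pmf \<omega>1 \<omega>2))"
    unfolding par_coupling_def map_pmf_comp by (auto intro: map_pmf_cong)
  with assms show ?thesis
    unfolding couplings_def by (simp only: map_pair) simp
qed

lemma E_par_coupling:
  assumes d01: "\<And>u v. 0 \<le> d u v \<and> d u v \<le> 1"
    and d_par: "\<And>u1 u2 v1 v2. d (Par UNIV u1 u2) (Par UNIV v1 v2) \<le> psum (d u1 v1) (d u2 v2)"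
  shows "E (par_coupling \<omega>1 \<omega>2) d \<le> psum (E \<omega>1 d) (E \<omega>2 d)"
proof -
  let ?g = "\<lambda>(u, v). d u v"
  have g01: "0 \<le> ?g z \<and> ?g z \<le> 1" for z using d01 by (simp add: split_beta)
  have psum01: "\<bar>psum (?g z1) (?g z2)\<bar> \<le> 1" for z1 z2
    using psum_bounds g01[of z1] g01[of z2] by fastforce
  have "E (par_coupling \<omega>1 \<omega>2) d = measure_pmf.expectation (pair_pmf \<omega>1 \<omega>2)
      (\<lambda>z. d (Par UNIV (fst (fst z)) (fst (snd z))) (Par UNIV (snd (fst z)) (snd (snd z))))"
    unfolding par_coupling_def by (simp add: split_beta)
  also have "\<dots> \<le> measure_pmf.expectation (pair_pmf \<omega>1 \<omega>2) (\<lambda>z. psum (?g (fst z)) (?g (snd z)))"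
  proof (rule integral_mono)
    show "integrable (measure_pmf (pair_pmf \<omega>1 \<omega>2))
      (\<lambda>z. d (Par UNIV (fst (fst z)) (fst (snd z))) (Par UNIV (snd (fst z)) (snd (snd z))))"
      by (rule measure_pmf.integrable_const_bound[where B=1]) (use d01 in auto)
    show "integrable (measure_pmf (pair_pmf \<omega>1 \<omega>2)) (\<lambda>z. psum (?g (fst z)) (?g (snd z)))"
      by (rule measure_pmf.integrable_const_bound[where B=1]) (use psum01 in auto)
  qed (simp add: split_beta d_par)
  also have "\<dots> = psum (E \<omega>1 d) (E \<omega>2 d)"
    by (rule expectation_pair_psum[OF g01 g01])
  finally show ?thesis .
qed

lemma K_par:
  assumes d01: "\<And>u v. 0 \<le> d u v \<and> d u v \<le> 1"
    and d_par: "\<And>u1 u2 v1 v2. d (Par UNIV u1 u2) (Par UNIV v1 v2) \<le> psum (d u1 v1) (d u2 v2)"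
    and s: "\<pi>1 \<in> proc_dists" "\<pi>1' \<in> proc_dists" "\<pi>2 \<in> proc_dists" "\<pi>2' \<in> proc_dists"
  shows "kantorovich d (par_pmf \<pi>1 \<pi>2) (par_pmf \<pi>1' \<pi>2')
     \<le> psum (kantorovich d \<pi>1 \<pi>1') (kantorovich d \<pi>2 \<pi>2')"
    (is "?K \<le> psum ?K1 ?K2")
proof (rule field_le_epsilon)
  fix e :: real assume e: "0 < e"
  have bnd: "bnd d" using d01 by (simp add: bnd_def bounded01_on_def)
  obtain \<omega>1 where \<omega>1: "\<omega>1 \<in> couplings \<pi>1 \<pi>1'" "E \<omega>1 d < ?K1 + e / 2"
    using K_approx[of "e / 2" \<pi>1 \<pi>1' d] e by auto
  obtain \<omega>2 where \<omega>2: "\<omega>2 \<in> couplings \<pi>2 \<pi>2'" "E \<omega>2 d < ?K2 + e / 2"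
    using K_approx[of "e / 2" \<pi>2 \<pi>2' d] e by auto
  have par_procs: "par_pmf p q \<in> proc_dists" if "p \<in> proc_dists" "q \<in> proc_dists" for p q
    using that by auto
  have "?K \<le> E (par_coupling \<omega>1 \<omega>2) d"
    by (rule K_le[OF bnd par_procs[OF s(1,3)] par_procs[OF s(2,4)]
          par_coupling_couplings[OF \<omega>1(1) \<omega>2(1)]])
  also have "\<dots> \<le> psum (E \<omega>1 d) (E \<omega>2 d)"
    by (rule E_par_coupling[where d=d, OF d01 d_par])
  also have "\<dots> \<le> psum ?K1 ?K2 + 2 * (e / 2)"
    using E_props(2,3)[OF bnd coupling_procs[OF \<omega>1(1) s(1,2)]]
      E_props(2,3)[OF bnd coupling_procs[OF \<omega>2(1) s(3,4)]]
      K_bounds[OF bnd s(1,2)] K_bounds[OF bnd s(3,4)] \<omega>1(2) \<omega>2(2) e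
    by (intro psum_approx) auto
  finally show "?K \<le> psum ?K1 ?K2 + e" by simp
qed

lemma pmf_of_list_single: "pmf_of_list [(x, 1)] = return_pmf x"
proof -
  have "pmf_of_list_wf [(x, 1::real)]" by (simp add: pmf_of_list_wf_def)
  from set_pmf_of_list[OF this] show ?thesis by (simp add: set_pmf_subset_singleton)
qed

lemma step_Nil: "\<not> step Nil a \<pi>"
  by (auto elim: step.cases)

lemma step_Prefix1: "step (Prefix b [(t, 1)]) a \<pi> \<longleftrightarrow> a = b \<and> \<pi> = return_pmf t"
proof
  show "step (Prefix b [(t, 1)]) a \<pi> \<Longrightarrow> a = b \<and> \<pi> = return_pmf t"
    by (auto elim: step.cases simp: pmf_of_list_single)
  show "a = b \<and> \<pi> = return_pmf t \<Longrightarrow> step (Prefix b [(t, 1)]) a \<pi>"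
    using step.prefix[of "[(t, 1)]" b] by (simp add: pmf_of_list_single valid_weights_def)
qed

lemma step_Par_UNIV: "step (Par UNIV t1 t2) a \<pi> \<longleftrightarrow>
    (\<exists>\<pi>1 \<pi>2. step t1 a \<pi>1 \<and> step t2 a \<pi>2 \<and> \<pi> = par_pmf \<pi>1 \<pi>2)"
proof
  show "step (Par UNIV t1 t2) a \<pi> \<Longrightarrow> \<exists>\<pi>1 \<pi>2. step t1 a \<pi>1 \<and> step t2 a \<pi>2 \<and> \<pi> = par_pmf \<pi>1 \<pi>2"
    by (erule step.cases) auto
qed (auto intro: step.par_sync)

lemma bisim_fun_sym: "bisim_fun d u v = bisim_fun d v u"
  unfolding bisim_fun_def by (subst hausdorff_sym) (rule refl)

section \<open>Linked pairs of deterministic contexts\<close>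

text \<open>linked u v r: u and v are obtained from one context built from 0, a._ and the
  synchronous parallel composition by filling each hole with a pair of processes at
  bisimilarity distance below 1 (in either orientation); r is the product of the
  complements 1 - d of the distances of the filled-in pairs.\<close>
inductive linked :: "('a, 'v) pterm \<Rightarrow> ('a, 'v) pterm \<Rightarrow> real \<Rightarrow> bool" where
  leaf: "p \<in> procs \<Longrightarrow> q \<in> procs \<Longrightarrow> bisim_metric p q < 1 \<Longrightarrow>
    linked p q (1 - bisim_metric p q)"
| leaf_sym: "p \<in> procs \<Longrightarrow> q \<in> procs \<Longrightarrow> bisim_metric p q < 1 \<Longrightarrow>
    linked q p (1 - bisim_metric p q)"
| nil: "linked Nil Nil 1"
| prefix: "linked u v r \<Longrightarrow> linked (Prefix a [(u, 1)]) (Prefix a [(v, 1)]) r"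
| par: "linked u1 v1 r1 \<Longrightarrow> linked u2 v2 r2 \<Longrightarrow>
    linked (Par UNIV u1 u2) (Par UNIV v1 v2) (r1 * r2)"

lemma linked_sym: "linked u v r \<Longrightarrow> linked v u r"
  by (induction rule: linked.induct) (auto intro: linked.intros)

lemma linked_procs: "linked u v r \<Longrightarrow> u \<in> procs \<and> v \<in> procs"
  by (induction rule: linked.induct) (auto simp: procs_def valid_weights_def)

lemma linked_01: "linked u v r \<Longrightarrow> 0 \<le> r \<and> r \<le> 1"
  by (induction rule: linked.induct)
    (use bisim_metric_bnd in \<open>auto simp: bnd_def bounded01_on_def mult_le_one\<close>)

text \<open>The candidate pre-fixed point: the best bound 1 - r over all links of u and v.\<close>
definition dstar :: "('a, 'v) pterm \<Rightarrow> ('a, 'v) pterm \<Rightarrow> real" where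
  "dstar u v = Inf (insert 1 {1 - r | r. linked u v r})"

lemma dstar_set: "insert 1 {1 - r | r. linked u v r} \<subseteq> {0..1}"
  using linked_01 by fastforce

lemma dstar_01: "0 \<le> dstar u v \<and> dstar u v \<le> 1"
  unfolding dstar_def using dstar_set[of u v] bdd_01[OF dstar_set[of u v]]
  by (auto intro!: cInf_greatest cInf_lower)

lemma dstar_bnd: "bnd dstar"
  unfolding bnd_def bounded01_on_def using dstar_01 by blast

lemma dstar_linked: "linked u v r \<Longrightarrow> dstar u v \<le> 1 - r"
  unfolding dstar_def using bdd_01[OF dstar_set[of u v]] by (auto intro!: cInf_lower)

lemma dstar_greatest: "(\<And>r. linked u v r \<Longrightarrow> c \<le> 1 - r) \<Longrightarrow> c \<le> 1 \<Longrightarrow> c \<le> dstar u v"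
  unfolding dstar_def by (rule cInf_greatest) auto

text \<open>A single hole shows that dstar is below the bisimilarity metric.\<close>
lemma dstar_le_bisim_metric:
  assumes "u \<in> procs" "v \<in> procs"
  shows "dstar u v \<le> bisim_metric u v"
proof (cases "bisim_metric u v < 1")
  case True
  then show ?thesis using dstar_linked[OF linked.leaf[OF assms True]] by simp
qed (use dstar_01[of u v] in simp)

text \<open>dstar is sub-psum on parallel compositions: links of the components combine.\<close>
lemma dstar_par: "dstar (Par UNIV u1 u2) (Par UNIV v1 v2) \<le> psum (dstar u1 v1) (dstar u2 v2)"
  unfolding dstar_def[of u1 v1] dstar_def[of u2 v2]
proof (rule psum_Inf[OF dstar_set dstar_set])
  fix a b
  assume a: "a \<in> insert 1 {1 - r | r. linked u1 v1 r}"
    and b: "b \<in> insert 1 {1 - r | r. linked u2 v2 r}"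
  show "dstar (Par UNIV u1 u2) (Par UNIV v1 v2) \<le> psum a b"
  proof (cases "a = 1 \<or> b = 1")
    case True
    then show ?thesis
      using dstar_01[of "Par UNIV u1 u2" "Par UNIV v1 v2"] a b dstar_set
      by (auto simp: psum_def)
  next
    case False
    then obtain r1 r2 where "linked u1 v1 r1" "a = 1 - r1" "linked u2 v2 r2" "b = 1 - r2"
      using a b by auto
    then show ?thesis
      using dstar_linked[OF linked.par] by (simp add: psum_one_minus)
  qed
qed auto

lemma K_dstar_le_K_bisim_metric:
  "\<pi> \<in> proc_dists \<Longrightarrow> \<pi>' \<in> proc_dists \<Longrightarrow>
    kantorovich dstar \<pi> \<pi>' \<le> kantorovich bisim_metric \<pi> \<pi>'"
  using dstar_le_bisim_metric by (intro K_mono dstar_bnd bisim_metric_bnd)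

lemma bisim_metric_match:
  assumes "u \<in> procs" "v \<in> procs" "bisim_fun bisim_metric u v \<le> c" "c < 1" "0 < e"
    and "\<pi> \<in> der u a"
  shows "\<exists>\<pi>'\<in>der v a. kantorovich dstar \<pi> \<pi>' \<le> c + e"
proof -
  obtain \<pi>' where \<pi>': "\<pi>' \<in> der v a" "kantorovich bisim_metric \<pi> \<pi>' < c + e"
    using bisim_fun_match[OF bisim_metric_bnd assms] by blast
  have "\<pi> \<in> proc_dists" "\<pi>' \<in> proc_dists"
    using der_procs[OF assms(1)] der_procs[OF assms(2)] assms(6) \<pi>'(1) by blast+
  then have "kantorovich dstar \<pi> \<pi>' \<le> kantorovich bisim_metric \<pi> \<pi>'"
    by (rule K_dstar_le_K_bisim_metric)
  with \<pi>' show ?thesis by force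
qed

lemma linked_match:
  "linked u v r \<Longrightarrow> \<pi> \<in> der u a \<Longrightarrow> 0 < e \<Longrightarrow>
     \<exists>\<pi>'\<in>der v a. kantorovich dstar \<pi> \<pi>' \<le> 1 - r + e"
proof (induction u v r arbitrary: a \<pi> e rule: linked.induct)
  case (leaf p q)
  have "bisim_fun bisim_metric p q \<le> bisim_metric p q"
    using bisim_metric_prefixed leaf.hyps(1,2) unfolding prefixed_def by blast
  from bisim_metric_match[OF leaf.hyps(1,2) this leaf.hyps(3) leaf.prems(2,1)] show ?case
    by simp
next
  case (leaf_sym p q)
  have "bisim_fun bisim_metric q p \<le> bisim_metric p q"
    using bisim_metric_prefixed leaf_sym.hyps(1,2) bisim_fun_sym[of bisim_metric q p]
    unfolding prefixed_def by fastforce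
  from bisim_metric_match[OF leaf_sym.hyps(2,1) this leaf_sym.hyps(3) leaf_sym.prems(2,1)]
  show ?case by simp
next
  case nil
  then show ?case by (simp add: der_def step_Nil)
next
  case (prefix u v r b)
  have \<pi>: "a = b" "\<pi> = return_pmf u"
    using prefix.prems(1) by (simp_all add: der_def step_Prefix1)
  have target: "return_pmf v \<in> der (Prefix b [(v, 1)]) a"
    using \<pi>(1) by (simp add: der_def step_Prefix1)
  have dists: "return_pmf u \<in> proc_dists" "return_pmf v \<in> proc_dists"
    using linked_procs[OF prefix.hyps] by auto
  have "return_pmf (u, v) \<in> couplings (return_pmf u) (return_pmf v)"
    by (simp add: couplings_def)
  from K_le[OF dstar_bnd dists this]
  have "kantorovich dstar \<pi> (return_pmf v) \<le> dstar u v" by (simp add: \<pi>(2))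
  also have "\<dots> \<le> 1 - r" by (rule dstar_linked[OF prefix.hyps])
  finally show ?case
    using prefix.prems(2) by (intro bexI[OF _ target]) simp
next
  case (par u1 v1 r1 u2 v2 r2)
  obtain \<pi>1 \<pi>2 where s: "\<pi>1 \<in> der u1 a" "\<pi>2 \<in> der u2 a" and \<pi>: "\<pi> = par_pmf \<pi>1 \<pi>2"
    using par.prems(1) unfolding der_def mem_Collect_eq step_Par_UNIV by blast
  have e2: "0 < e / 2" using par.prems(2) by simp
  obtain \<pi>1' where \<pi>1': "\<pi>1' \<in> der v1 a" "kantorovich dstar \<pi>1 \<pi>1' \<le> 1 - r1 + e / 2"
    using par.IH(1)[OF s(1) e2] by blast
  obtain \<pi>2' where \<pi>2': "\<pi>2' \<in> der v2 a" "kantorovich dstar \<pi>2 \<pi>2' \<le> 1 - r2 + e / 2"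
    using par.IH(2)[OF s(2) e2] by blast
  have target: "par_pmf \<pi>1' \<pi>2' \<in> der (Par UNIV v1 v2) a"
    using \<pi>1'(1) \<pi>2'(1) unfolding der_def mem_Collect_eq step_Par_UNIV by blast
  have procs: "u1 \<in> procs" "v1 \<in> procs" "u2 \<in> procs" "v2 \<in> procs"
    using linked_procs[OF par.hyps(1)] linked_procs[OF par.hyps(2)] by auto
  have dists: "\<pi>1 \<in> proc_dists" "\<pi>1' \<in> proc_dists" "\<pi>2 \<in> proc_dists" "\<pi>2' \<in> proc_dists"
    using subsetD[OF der_procs[OF procs(1)] s(1)] subsetD[OF der_procs[OF procs(2)] \<pi>1'(1)]
      subsetD[OF der_procs[OF procs(3)] s(2)] subsetD[OF der_procs[OF procs(4)] \<pi>2'(1)] .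
  have r1: "0 \<le> r1 \<and> r1 \<le> 1" and r2: "0 \<le> r2 \<and> r2 \<le> 1"
    using linked_01[OF par.hyps(1)] linked_01[OF par.hyps(2)] by auto
  have "kantorovich dstar \<pi> (par_pmf \<pi>1' \<pi>2')
      \<le> psum (kantorovich dstar \<pi>1 \<pi>1') (kantorovich dstar \<pi>2 \<pi>2')"
    unfolding \<pi> by (rule K_par[where d=dstar, OF dstar_01 dstar_par dists])
  also have "\<dots> \<le> psum (1 - r1) (1 - r2) + 2 * (e / 2)"
    using \<pi>1'(2) \<pi>2'(2) e2 r1 r2 K_bounds[OF dstar_bnd dists(1,2)] K_bounds[OF dstar_bnd dists(3,4)]
    by (intro psum_approx) linarith+
  also have "\<dots> = 1 - r1 * r2 + e" by (simp add: psum_one_minus)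
  finally show ?case by (rule bexI[OF _ target])
qed

lemma dstar_prefixed: "prefixed dstar"
  unfolding prefixed_def
proof (intro ballI)
  fix u v :: "('a, 'b) pterm" assume uv: "u \<in> procs" "v \<in> procs"
  have "bisim_fun dstar u v \<le> 1 - r" if "linked u v r" for r
    unfolding bisim_fun_def
  proof (rule sup01_least)
    show "0 \<le> 1 - r" using linked_01[OF that] by simp
    fix x assume "x \<in> range (\<lambda>a. hausdorff (kantorovich dstar) (der u a) (der v a))"
    then obtain a where "x = hausdorff (kantorovich dstar) (der u a) (der v a)" by blast
    also have "\<dots> \<le> 1 - r"
    proof (rule hausdorff_le[OF K_bounded_der[OF dstar_bnd uv]])
      show "0 \<le> 1 - r" using linked_01[OF that] by simp
      show "\<exists>\<pi>'\<in>der v a. kantorovich dstar \<pi> \<pi>' \<le> 1 - r + e"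
        if "\<pi> \<in> der u a" "0 < e" for \<pi> e
        by (rule linked_match[OF \<open>linked u v r\<close> that])
      show "\<exists>\<pi>'\<in>der u a. kantorovich dstar \<pi> \<pi>' \<le> 1 - r + e"
        if "\<pi> \<in> der v a" "0 < e" for \<pi> e
        by (rule linked_match[OF linked_sym[OF \<open>linked u v r\<close>] that])
    qed
    finally show "x \<le> 1 - r" .
  qed
  then show "bisim_fun dstar u v \<le> dstar u v"
    using bisim_fun_bounds[OF dstar_bnd uv] by (intro dstar_greatest) auto
qed

lemma bisim_metric_linked: "linked u v r \<Longrightarrow> bisim_metric u v \<le> 1 - r"
  using bisim_metric_le_prefixed[OF dstar_bnd dstar_prefixed] linked_procs dstar_linked
  by (meson order_trans)

lemma epow_add: "m1 \<noteq> \<infinity> \<Longrightarrow> m2 \<noteq> \<infinity> \<Longrightarrow> epow c (m1 + m2) = epow c m1 * epow c m2"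
  by (cases m1; cases m2) (auto simp: epow_def power_add)

lemma epow_nonneg: "0 \<le> c \<Longrightarrow> 0 \<le> epow c m"
  by (cases m) (auto simp: epow_def)

lemma dda_lower:
  assumes "finite F" "\<And>x. e x \<le> 1"
  shows "1 - (\<Prod>x\<in>F. epow (1 - e x) (m x)) \<le> dda m e"
proof -
  let ?S = "{(\<Prod>x\<in>F. epow (1 - e x) (m x)) | F. finite F}"
  have "bdd_below ?S"
    using assms(2) by (auto intro!: bdd_belowI[where m=0] prod_nonneg epow_nonneg)
  then have "Inf ?S \<le> (\<Prod>x\<in>F. epow (1 - e x) (m x))"
    using assms(1) by (intro cInf_lower) auto
  then show ?thesis unfolding dda_def by simp
qed

lemma mult_finite: "deterministic t \<Longrightarrow> mult t x \<noteq> \<infinity>"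
  by (induction rule: deterministic.induct) (auto simp: zero_enat_def one_enat_def)

lemma vars_finite: "deterministic t \<Longrightarrow> finite (vars t)"
  by (induction rule: deterministic.induct) auto

lemma linked_subst:
  assumes "closed_subst \<sigma>1" "closed_subst \<sigma>2" "\<forall>x. bisim_metric (\<sigma>1 x) (\<sigma>2 x) < 1"
  shows "deterministic t \<Longrightarrow> finite F \<Longrightarrow> vars t \<subseteq> F \<Longrightarrow>
    linked (subst \<sigma>1 t) (subst \<sigma>2 t)
      (\<Prod>x\<in>F. epow (1 - bisim_metric (\<sigma>1 x) (\<sigma>2 x)) (mult t x))"
proof (induction rule: deterministic.induct)
  case 1
  then show ?case by (simp add: epow_def zero_enat_def linked.nil)
next
  case (2 y)
  let ?c = "\<lambda>x. 1 - bisim_metric (\<sigma>1 x) (\<sigma>2 x)"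
  have "(\<Prod>x\<in>F. epow (?c x) (mult (Var y) x)) = (\<Prod>x\<in>F. if x = y then ?c x else 1)"
    by (rule prod.cong) (auto simp: epow_def zero_enat_def one_enat_def)
  also have "\<dots> = ?c y" using 2 by (simp add: prod.delta)
  finally show ?case
    using assms by (simp add: closed_subst_def linked.leaf)
next
  case (3 t a)
  then show ?case by (simp add: linked.prefix)
next
  case (4 t u)
  let ?c = "\<lambda>x. 1 - bisim_metric (\<sigma>1 x) (\<sigma>2 x)"
  have "(\<Prod>x\<in>F. epow (?c x) (mult (Par UNIV t u) x))
      = (\<Prod>x\<in>F. epow (?c x) (mult t x)) * (\<Prod>x\<in>F. epow (?c x) (mult u x))"
    unfolding prod.distrib[symmetric]
    by (rule prod.cong) (simp_all add: epow_add mult_finite 4)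
  with 4 show ?case by (simp add: linked.par)
qed

theorem proposition2:
  fixes t :: "('a::countable, 'v::countable) pterm"
    and \<sigma>1 \<sigma>2 :: "'v \<Rightarrow> ('a, 'v) pterm"
  assumes "infinite (UNIV :: 'v set)"
    and "deterministic t"
    and "closed_subst \<sigma>1" and "closed_subst \<sigma>2"
    and "\<forall>x. bisim_metric (\<sigma>1 x) (\<sigma>2 x) < 1"
  shows "bisim_metric (subst \<sigma>1 t) (subst \<sigma>2 t)
           \<le> dda (mult t) (\<lambda>x. bisim_metric (\<sigma>1 x) (\<sigma>2 x))"
proof -
  let ?e = "\<lambda>x. bisim_metric (\<sigma>1 x) (\<sigma>2 x)"
  have "linked (subst \<sigma>1 t) (subst \<sigma>2 t) (\<Prod>x\<in>vars t. epow (1 - ?e x) (mult t x))"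
    by (rule linked_subst[OF assms(3-5) assms(2) vars_finite[OF assms(2)] order_refl])
  then have "bisim_metric (subst \<sigma>1 t) (subst \<sigma>2 t) \<le> 1 - (\<Prod>x\<in>vars t. epow (1 - ?e x) (mult t x))"
    by (rule bisim_metric_linked)
  also have "\<dots> \<le> dda (mult t) ?e"
    using assms(5) by (intro dda_lower vars_finite[OF assms(2)]) (simp add: less_imp_le)
  finally show ?thesis .
qed

end
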